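(* Let $\mathbb{O}$ be the real algebra of octonions with its standard basis $1,e_1,\dots,e_7$, where $e_\ell^2=-1$ for all $\ell$, $e_\ell e_m=-e_m e_\ell$ for $\ell\neq m$, and for $\ell\ne m$ the product $e_\ell e_m$ equals $\pm e_p$ for some $p$. Call an element homogeneous if it is a nonzero real multiple of a basis element. Then there is no $n\ge 1$ and no map $\sigma$ from the homogeneous elements of $\mathbb{O}$ to $\Gamma=\mathbb{Z}_2^n$ such that for all homogeneous $x,y$ one has $\sigma(xy)=\sigma(x)+\sigma(y)$ and $xy=(-1)^{\langle\sigma(x),\sigma(y)\rangle}yx$, where $\langle\cdot,\cdot\rangle$ denotes the standard scalar product on $\mathbb{Z}_2^n$. That is, $\mathbb{O}$ cannot be realized as a graded commutative algebra.
   Context: For an abelian group $\Gamma=\mathbb{Z}_2^n$, a $\Gamma$-graded commutative algebra is an algebra $A$ with a basis of homogeneous elements each assigned a degree $\sigma\in\Gamma$ such that $\sigma(xy)=\sigma(x)+\sigma(y)$ and $xy=(-1)^{\langle\sigma(x),\sigma(y)\rangle}yx$ for homogeneous $x,y$, where $\langle\cdot,\cdot\rangle$ is the standard scalar product of vectors in $\mathbb{Z}_2^n$. *)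

theory Defs
  imports "HOL-Analysis.Analysis" "HOL-Library.Z2"
begin

text \<open>Octonions: elements are real coordinate functions on the index set {0..7}
  (index 0 is the unit 1, indices 1..7 are e_1..e_7); coordinates outside {0..7} are 0.
  The multiplication table is the standard Fano-plane one with oriented triples
  (i, i+1, i+3) mod 7, i.e. (1,2,4),(2,3,5),(3,4,6),(4,5,7),(5,6,1),(6,7,2),(7,1,3):
  e_a e_b = e_c, e_b e_c = e_a, e_c e_a = e_b, and the reversed products are negative.\<close>

type_synonym octonion = "nat \<Rightarrow> real"

definition octonions :: "octonion set" where
  "octonions = {x. \<forall>k\<ge>8. x k = 0}"

text \<open>Third index (in 0..6) of the Fano line through distinct a, b (in 0..6),
  and the sign of the product e_(a+1) e_(b+1).\<close>
definition fano_third :: "nat \<Rightarrow> nat \<Rightarrow> nat" where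
  "fano_third a b =
    (let d = (b + 7 - a) mod 7 in
     if d = 1 then (a + 3) mod 7 else
     if d = 2 then (a + 6) mod 7 else
     if d = 4 then (a + 5) mod 7 else
     if d = 6 then (b + 3) mod 7 else
     if d = 5 then (b + 6) mod 7 else (b + 5) mod 7)"

definition fano_pos :: "nat \<Rightarrow> nat \<Rightarrow> bool" where
  "fano_pos a b = ((b + 7 - a) mod 7 \<in> {1, 2, 4})"

definition oct_basis_mult :: "nat \<Rightarrow> nat \<Rightarrow> real \<times> nat" where
  "oct_basis_mult i j =
    (if i = 0 then (1, j)
     else if j = 0 then (1, i)
     else if i = j then (-1, 0)
     else ((if fano_pos (i - 1) (j - 1) then 1 else -1), fano_third (i - 1) (j - 1) + 1))"

definition oct_e :: "nat \<Rightarrow> octonion" where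
  "oct_e i = (\<lambda>k. if k = i then 1 else 0)"

definition oct_mult :: "octonion \<Rightarrow> octonion \<Rightarrow> octonion" where
  "oct_mult x y = (\<lambda>k. \<Sum>i<8. \<Sum>j<8.
      if snd (oct_basis_mult i j) = k then fst (oct_basis_mult i j) * x i * y j else 0)"

definition oct_scale :: "real \<Rightarrow> octonion \<Rightarrow> octonion" where
  "oct_scale c x = (\<lambda>k. c * x k)"

definition oct_homogeneous :: "octonion \<Rightarrow> bool" where
  "oct_homogeneous x \<longleftrightarrow> (\<exists>c i. c \<noteq> 0 \<and> i < 8 \<and> x = oct_scale c (oct_e i))"

definition z2_inner :: "bit ^ 'n \<Rightarrow> bit ^ 'n \<Rightarrow> bit" where
  "z2_inner a b = (\<Sum>i\<in>UNIV. a $ i * b $ i)"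

definition sign_of_bit :: "bit \<Rightarrow> real" where
  "sign_of_bit b = (if b = 0 then 1 else -1)"

end

theory Submission
  imports Defs
begin

text \<open>From e1 e2 = e4 and e3 e4 = e6, additivity gives
  \<sigma>(e6) = \<sigma>(e1) + \<sigma>(e2) + \<sigma>(e3). Comparing e_i e_j with e_j e_i shows that
  \<langle>\<sigma>(e_i), \<sigma>(e_j)\<rangle> is 0 if e_i and e_j commute and 1 if they anticommute. Since e1 commutes
  with itself and anticommutes with e2 and e3, bilinearity yields
  \<langle>\<sigma>(e1), \<sigma>(e6)\<rangle> = 0 + 1 + 1 = 0; but e1 and e6 anticommute.\<close>

definition oct_graded_commutative :: "(octonion \<Rightarrow> bit ^ 'n) \<Rightarrow> bool" where
  "oct_graded_commutative \<sigma> \<longleftrightarrow>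
    (\<forall>x y. oct_homogeneous x \<longrightarrow> oct_homogeneous y \<longrightarrow>
       \<sigma> (oct_mult x y) = \<sigma> x + \<sigma> y \<and>
       oct_mult x y = oct_scale (sign_of_bit (z2_inner (\<sigma> x) (\<sigma> y))) (oct_mult y x))"

lemma z2_inner_add_right: "z2_inner a (b + c) = z2_inner a b + z2_inner a c"
  unfolding z2_inner_def by (simp only: vector_add_component distrib_left sum.distrib)

lemma sum_sum_delta:
  fixes f :: "'a \<Rightarrow> 'b \<Rightarrow> 'c::comm_monoid_add"
  assumes "finite A" "finite B"
  shows "(\<Sum>a\<in>A. \<Sum>b\<in>B. if a = i \<and> b = j \<and> P a b then f a b else 0) =
    (if i \<in> A \<and> j \<in> B \<and> P i j then f i j else 0)"
proof -
  have "(\<Sum>a\<in>A. \<Sum>b\<in>B. if a = i \<and> b = j \<and> P a b then f a b else 0) =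
      (\<Sum>a\<in>A. if a = i then \<Sum>b\<in>B. if b = j then (if P a b then f a b else 0) else 0 else 0)"
    by (intro sum.cong refl) (auto intro: sum.cong)
  then show ?thesis
    using assms by (simp add: sum.delta)
qed

lemma oct_mult_oct_e_apply:
  assumes "i < 8" "j < 8"
  shows "oct_mult (oct_e i) (oct_e j) m =
    (if snd (oct_basis_mult i j) = m then fst (oct_basis_mult i j) else 0)"
proof -
  have "oct_mult (oct_e i) (oct_e j) m =
      (\<Sum>i'<8. \<Sum>j'<8. if i' = i \<and> j' = j \<and> snd (oct_basis_mult i' j') = m
         then fst (oct_basis_mult i' j') else 0)"
    unfolding oct_mult_def oct_e_def by (intro sum.cong refl) simp
  also have "\<dots> = (if snd (oct_basis_mult i j) = m then fst (oct_basis_mult i j) else 0)"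
    by (simp only: sum_sum_delta finite_lessThan lessThan_iff assms simp_thms)
  finally show ?thesis .
qed

lemma oct_mult_oct_e:
  assumes "i < 8" "j < 8" "oct_basis_mult i j = (s, k)"
  shows "oct_mult (oct_e i) (oct_e j) = oct_scale s (oct_e k)"
  using oct_mult_oct_e_apply[OF assms(1,2)] assms(3) by (auto simp: oct_scale_def oct_e_def)

lemma fst_oct_basis_mult: "fst (oct_basis_mult i j) \<in> {1, -1}"
  by (simp add: oct_basis_mult_def)

lemma oct_homogeneous_oct_e: "i < 8 \<Longrightarrow> oct_homogeneous (oct_e i)"
  unfolding oct_homogeneous_def by (rule exI[of _ 1]) (auto simp: oct_scale_def)

lemma oct_graded_commutative_add:
  assumes "oct_graded_commutative \<sigma>" "i < 8" "j < 8" "oct_basis_mult i j = (1, k)"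
  shows "\<sigma> (oct_e k) = \<sigma> (oct_e i) + \<sigma> (oct_e j)"
proof -
  have "oct_mult (oct_e i) (oct_e j) = oct_e k"
    using oct_mult_oct_e[OF assms(2-4)] by (simp add: oct_scale_def)
  moreover have "\<sigma> (oct_mult (oct_e i) (oct_e j)) = \<sigma> (oct_e i) + \<sigma> (oct_e j)"
    using assms(1) oct_homogeneous_oct_e[OF assms(2)] oct_homogeneous_oct_e[OF assms(3)]
    unfolding oct_graded_commutative_def by blast
  ultimately show ?thesis by simp
qed

lemma oct_graded_commutative_inner:
  assumes "oct_graded_commutative \<sigma>" "i < 8" "j < 8"
  shows "z2_inner (\<sigma> (oct_e i)) (\<sigma> (oct_e j)) =
    (if fst (oct_basis_mult i j) = fst (oct_basis_mult j i) then 0 else 1)"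
proof -
  define b where "b = z2_inner (\<sigma> (oct_e i)) (\<sigma> (oct_e j))"
  define k where "k = snd (oct_basis_mult i j)"
  have "oct_mult (oct_e i) (oct_e j) = oct_scale (sign_of_bit b) (oct_mult (oct_e j) (oct_e i))"
    using assms oct_homogeneous_oct_e unfolding oct_graded_commutative_def b_def by blast
  then have "fst (oct_basis_mult i j) =
      sign_of_bit b * (if snd (oct_basis_mult j i) = k then fst (oct_basis_mult j i) else 0)"
    using fun_cong[of _ _ k] oct_mult_oct_e_apply[OF assms(2,3), of k] oct_mult_oct_e_apply[OF assms(3,2), of k]
    by (simp add: oct_scale_def k_def)
  then have "fst (oct_basis_mult i j) = sign_of_bit b * fst (oct_basis_mult j i)"
    using fst_oct_basis_mult[of i j] by (auto split: if_splits)
  then show ?thesis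
    using fst_oct_basis_mult[of i j] fst_oct_basis_mult[of j i]
    unfolding b_def[symmetric] by (cases b) (auto simp: sign_of_bit_def)
qed

theorem mainTheorem2:
  fixes \<sigma> :: "octonion \<Rightarrow> bit ^ 'n"
  shows "\<not> (\<forall>x y. oct_homogeneous x \<longrightarrow> oct_homogeneous y \<longrightarrow>
            \<sigma> (oct_mult x y) = \<sigma> x + \<sigma> y \<and>
            oct_mult x y = oct_scale (sign_of_bit (z2_inner (\<sigma> x) (\<sigma> y))) (oct_mult y x))"
proof
  assume "\<forall>x y. oct_homogeneous x \<longrightarrow> oct_homogeneous y \<longrightarrow>
            \<sigma> (oct_mult x y) = \<sigma> x + \<sigma> y \<and>
            oct_mult x y = oct_scale (sign_of_bit (z2_inner (\<sigma> x) (\<sigma> y))) (oct_mult y x)"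
  then have graded: "oct_graded_commutative \<sigma>"
    unfolding oct_graded_commutative_def .
  have sigma_e6: "\<sigma> (oct_e 6) = \<sigma> (oct_e 3) + (\<sigma> (oct_e 1) + \<sigma> (oct_e 2))"
    using oct_graded_commutative_add[OF graded, of 3 4 6] oct_graded_commutative_add[OF graded, of 1 2 4]
    by (simp add: oct_basis_mult_def fano_pos_def fano_third_def)
  have inner_e1: "z2_inner (\<sigma> (oct_e 1)) (\<sigma> (oct_e j)) = (if j = 1 then 0 else 1)"
    if "j \<in> {1, 2, 3, 6}" for j
    using that oct_graded_commutative_inner[OF graded, of 1 j]
    by (auto simp: oct_basis_mult_def fano_pos_def fano_third_def)
  have "z2_inner (\<sigma> (oct_e 1)) (\<sigma> (oct_e 6)) = 1 + (0 + 1)"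
    unfolding sigma_e6 z2_inner_add_right using inner_e1[of 1] inner_e1[of 2] inner_e1[of 3] by simp
  then show False
    using inner_e1[of 6] by simp
qed

end
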